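(* Let $a$ and $b$ be two distinct complex numbers and let $f$ be a holomorphic function on $\mathbb{C}^n$. Suppose that the function $$P(f)(z)=\prod_{i=1}^{n}\left(\frac{\partial f(z)}{\partial z_i}-a\right)\left(\frac{\partial f(z)}{\partial z_i}-b\right)\left(\frac{\partial f(z)}{\partial z_i}-f(z)\right)$$ omits the value $0$ on $\mathbb{C}^n$, i.e. $P(f)(z)\neq 0$ for all $z\in\mathbb{C}^n$. Then $f$ is constant.
   Context: $z=(z_1,\dots,z_n)$ denotes a point of $\mathbb{C}^n$ and $\partial f/\partial z_i$ the complex partial derivatives of $f$. *)

theory Defs
  imports "HOL-Analysis.Analysis"
begin

text \<open>Points of C^n are vectors of type complex^'n (n = CARD('n)).\<close>

definition holomorphic_Cn :: "(complex^'n \<Rightarrow> complex) \<Rightarrow> bool" where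
  "holomorphic_Cn f \<longleftrightarrow>
     (\<forall>z. \<exists>c::complex^'n. (f has_derivative (\<lambda>h. \<Sum>i\<in>UNIV. c $ i * h $ i)) (at z))"

definition cpartial :: "(complex^'n \<Rightarrow> complex) \<Rightarrow> 'n \<Rightarrow> complex^'n \<Rightarrow> complex" where
  "cpartial f i z = deriv (\<lambda>t. f (z + axis i t)) 0"

end

theory Submission
  imports Defs "HOL-Complex_Analysis.Complex_Analysis"
begin

text \<open>Restricted to a coordinate line, \<open>f\<close> becomes an entire function \<open>g\<close> of one variable
  whose derivative is a partial derivative of \<open>f\<close>, so \<open>g'\<close> omits \<open>a\<close> and \<open>b\<close>. By the little
  Picard theorem \<open>g'\<close> is a constant \<open>k\<close>, hence \<open>g t = k t + d\<close>. If \<open>k \<noteq> 0\<close>, then \<open>g\<close> attains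
  the value \<open>k = g'\<close> somewhere, which the factor \<open>\<partial>f/\<partial>z\<^sub>i - f\<close> forbids. So \<open>f\<close> is
  constant along every coordinate line, and therefore constant.\<close>

lemma axis_zero [simp]: "axis i 0 = (0::'a::zero^'n)"
  by (simp add: vec_eq_iff axis_def)

lemma bounded_linear_axis: "bounded_linear (axis i :: 'a::real_normed_vector \<Rightarrow> 'a^'n)"
proof (rule bounded_linear_intro[where K = 1])
  show "norm (axis i x) \<le> norm x * 1" for x :: 'a
  proof -
    have "(\<Sum>j\<in>UNIV. (norm (axis i x $ j))\<^sup>2) = (norm x)\<^sup>2"
      by (simp add: axis_def if_distrib[of "\<lambda>y. (norm y)\<^sup>2"] cong: if_cong)
    then show ?thesis
      by (simp add: norm_vec_def L2_set_def)
  qed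
qed (simp_all add: vec_eq_iff axis_def)

lemma has_field_derivative_along_axis:
  fixes f :: "complex^'n \<Rightarrow> complex"
  assumes "(f has_derivative (\<lambda>h. \<Sum>j\<in>UNIV. c $ j * h $ j)) (at (z + axis i t))"
  shows "((\<lambda>s. f (z + axis i s)) has_field_derivative c $ i) (at t)"
proof -
  have line: "((\<lambda>s. z + axis i s) has_derivative axis i) (at t)"
    using has_derivative_add_const[OF bounded_linear_imp_has_derivative[OF bounded_linear_axis]]
    by (simp add: add.commute)
  have "(\<lambda>h. \<Sum>j\<in>UNIV. c $ j * h $ j) \<circ> axis i = (*) (c $ i)"
    by (auto simp: fun_eq_iff axis_def if_distrib cong: if_cong)
  then show ?thesis
    using diff_chain_at[OF line assms] by (simp add: has_field_derivative_def mult.commute o_def)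
qed

lemma holomorphic_Cn_has_field_derivative_along_axis:
  fixes f :: "complex^'n \<Rightarrow> complex"
  assumes "holomorphic_Cn f"
  shows "((\<lambda>s. f (z + axis i s)) has_field_derivative cpartial f i (z + axis i t)) (at t)"
proof -
  obtain c where c: "(f has_derivative (\<lambda>h. \<Sum>j\<in>UNIV. c $ j * h $ j)) (at (z + axis i t))"
    using assms unfolding holomorphic_Cn_def by blast
  have "cpartial f i (z + axis i t) = c $ i"
    unfolding cpartial_def
    by (intro DERIV_imp_deriv has_field_derivative_along_axis) (simp add: c)
  with has_field_derivative_along_axis[OF c] show ?thesis
    by simp
qed

lemma entire_constant_if_deriv_omits_values:
  fixes g g' :: "complex \<Rightarrow> complex"
  assumes "a \<noteq> b"
    and g': "\<And>s. (g has_field_derivative g' s) (at s)"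
    and omits_ab: "\<And>s. g' s \<notin> {a, b}"
    and omits_g: "\<And>s. g' s \<noteq> g s"
  shows "g s = g t"
proof -
  have "g holomorphic_on UNIV"
    using g' by (auto simp: holomorphic_on_def field_differentiable_def)
  moreover have "deriv g = g'"
    using g' DERIV_imp_deriv by blast
  ultimately have "g' holomorphic_on UNIV"
    using holomorphic_deriv[of g UNIV] by simp
  then obtain k where k: "g' = (\<lambda>_. k)"
    using little_Picard[OF _ \<open>a \<noteq> b\<close>] omits_ab by blast
  have "((\<lambda>s. g s - k * s) has_field_derivative 0) (at s within UNIV)" for s
    using g'[of s] k by (auto intro!: derivative_eq_intros)
  then obtain d where d: "\<And>s. g s = k * s + d"
    using has_field_derivative_zero_constant[of UNIV "\<lambda>s. g s - k * s"]
    by (auto simp: algebra_simps)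
  have "k = 0"
  proof (rule ccontr)
    assume "k \<noteq> 0"
    then have "g ((k - d) / k) = k"
      using d by simp
    with omits_g k show False
      by metis
  qed
  with d show ?thesis
    by simp
qed

lemma constant_if_constant_along_axes:
  fixes f :: "'a::comm_monoid_add^'n \<Rightarrow> 'b"
  assumes "\<And>z i t. f (z + axis i t) = f z"
  shows "f z = f 0"
proof -
  have "f (\<Sum>i\<in>S. axis i (z $ i)) = f 0" if "finite S" for S
    using that
  proof (induction S rule: finite_induct)
    case (insert j S)
    then show ?case
      using assms[of "\<Sum>i\<in>S. axis i (z $ i)" j "z $ j"] by (simp add: add.commute)
  qed simp
  moreover have "(\<Sum>i\<in>UNIV. axis i (z $ i)) = z"
    by (simp add: vec_eq_iff axis_def)
  ultimately show ?thesis
    by (metis finite)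
qed

theorem proposition2:
  fixes f :: "complex^'n \<Rightarrow> complex" and a b :: complex
  assumes "a \<noteq> b"
    and "holomorphic_Cn f"
    and "\<forall>z. (\<Prod>i\<in>UNIV. (cpartial f i z - a) * (cpartial f i z - b) * (cpartial f i z - f z)) \<noteq> 0"
  shows "\<exists>c. \<forall>z. f z = c"
proof -
  have omits: "cpartial f i z \<notin> {a, b} \<and> cpartial f i z \<noteq> f z" for i z
    using assms(3) by (auto simp: prod_zero_iff)
  have "f (z + axis i t) = f (z + axis i 0)" for z i t
    using entire_constant_if_deriv_omits_values[OF \<open>a \<noteq> b\<close>
        holomorphic_Cn_has_field_derivative_along_axis[OF assms(2)]] omits
    by blast
  then have "f z = f 0" for z
    by (intro constant_if_constant_along_axes) simp
  then show ?thesis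
    by blast
qed

end
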